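(* Let $0<p<1/2$ be a constant, let $\varepsilon,\delta\in(0,1)$, and let $T$ be a tree with $n$ edges, each of which is either realized or not, accessed through a 2-sided noisy oracle with error probability $p$. Consider the following algorithm $\mathcal{A}$ (with parameters $\varepsilon,\delta,p$). Set $c=\lceil \log_{\frac{1-p}{p}}(1/\delta)\rceil$ (the threshold) and a global budget $B=\lceil \frac{1}{\varepsilon}\cdot\frac{1}{1-2p}\rceil\cdot c\cdot n$. Process the edges of $T$ one after another in a fixed order. For the current edge $e$, set a counter to $0$; while the counter is $<c$ and $B>0$: query $e$, decrease $B$ by $1$, and increase the counter by $1$ if the answer is ``Yes'' and decrease it by $1$ if the answer is ``No''. After this loop, if $B=0$, output False (``disconnected'') and stop; otherwise move to the next edge. If all edges are processed, output True (``connected''). Then: if all edges of $T$ are realized ($T$ is connected), $\mathcal{A}$ outputs True with probability at least $1-\varepsilon$; if at least one edge of $T$ is not realized ($T$ is disconnected), $\mathcal{A}$ outputs False with probability at least $1-\delta$; and $\mathcal{A}$ performs at most $O\!\left(\frac{1}{\varepsilon}\, n\log\frac{1}{\delta}\right)$ queries.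
   Context: Noisy edge-query model: each edge of a given graph is either realized or non-realized (fixed arbitrarily, possibly adversarially, in advance). An algorithm can query an oracle on an edge $e$, asking ``Is $e$ realized?'', and receives ``Yes'' or ``No''; each query costs $1$. Answers to distinct queries (including repeated queries on the same edge) are independent. In the 2-sided error regime with error probability $p<1/2$ (a constant), each answer is wrong (``No'' for a realized edge, ``Yes'' for a non-realized edge) with probability $p$ and correct with probability $1-p$. A tree is called connected if all its edges are realized and disconnected otherwise. *)

theory Defs
  imports "HOL-Probability.Probability_Mass_Function"
begin

text \<open>One noisy edge-query answer for an edge whose realization status is r:
  correct (= r) with probability 1 - p, wrong with probability p.
  Distinct calls are independent (each call is a fresh bind).\<close>
definition noisy_answer :: "real \<Rightarrow> bool \<Rightarrow> bool pmf" where
  "noisy_answer p r = map_pmf (\<lambda>b. if b then r else \<not> r) (bernoulli_pmf (1 - p))"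

text \<open>The algorithm's run: threshold c, remaining edges (realization status,
  in processing order), counter k for the current (head) edge, remaining budget B.
  The result is (output, number of queries performed).\<close>
function alg_run :: "real \<Rightarrow> nat \<Rightarrow> bool list \<Rightarrow> int \<Rightarrow> nat \<Rightarrow> (bool \<times> nat) pmf" where
  "alg_run p c [] k B = return_pmf (True, 0)"
| "alg_run p c (e # es) k B =
     (if k < int c \<and> B > 0 then
        bind_pmf (noisy_answer p e) (\<lambda>a.
          map_pmf (\<lambda>(r, q). (r, Suc q))
            (alg_run p c (e # es) (if a then k + 1 else k - 1) (B - 1)))
      else if B = 0 then return_pmf (False, 0)
      else alg_run p c es 0 B)"
  by pat_completeness auto
termination
  by (relation "measures [\<lambda>(_, _, _, _, B). B, \<lambda>(_, _, es, _, _). length es]") auto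

definition threshold :: "real \<Rightarrow> real \<Rightarrow> nat" where
  "threshold p \<delta> = nat \<lceil>log ((1 - p) / p) (1 / \<delta>)\<rceil>"

definition budget :: "real \<Rightarrow> real \<Rightarrow> real \<Rightarrow> nat \<Rightarrow> nat" where
  "budget p \<epsilon> \<delta> n = nat \<lceil>(1 / \<epsilon>) * (1 / (1 - 2 * p))\<rceil> * threshold p \<delta> * n"

text \<open>Algorithm A with parameters eps, delta, p on a tree given by the list of its
  edges' realization statuses (length = number of edges n).\<close>
definition alg_A :: "real \<Rightarrow> real \<Rightarrow> real \<Rightarrow> bool list \<Rightarrow> (bool \<times> nat) pmf" where
  "alg_A p \<epsilon> \<delta> T = alg_run p (threshold p \<delta>) T 0 (budget p \<epsilon> \<delta> (length T))"

end

theory Submission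
  imports Defs
begin

text \<open>If all edges are realized, every query lowers the potential \<open>|es| c - k\<close> (the net number
  of Yes answers still needed) by \<open>1 - 2p\<close> in expectation, while the budget drops by one; so
  \<open>B \<cdot> Pr[False]\<close> never exceeds the potential divided by \<open>1 - 2p\<close>, a Markov-type bound which
  for the initial potential \<open>n c\<close> and the chosen budget gives \<open>Pr[False] \<le> \<epsilon>\<close>.
  On an unrealized edge the counter is a random walk with downward drift for which
  \<open>\<rho>^(c - k)\<close>, \<open>\<rho> = p / (1 - p)\<close>, is a martingale; hence the walk ever reaches \<open>c\<close> with
  probability at most \<open>\<rho>^c \<le> \<delta>\<close> (gambler's ruin). The number of queries never exceeds
  the budget, which is \<open>O(n log(1/\<delta>) / \<epsilon>)\<close>.\<close>

lemma measure_pmf_prob_bind_noisy_answer: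
  assumes "0 \<le> p" "p \<le> 1"
  shows "measure_pmf.prob (bind_pmf (noisy_answer p e) f) A =
     (1 - p) * measure_pmf.prob (f e) A + p * measure_pmf.prob (f (\<not> e)) A"
proof -
  have "ennreal (measure_pmf.prob (bind_pmf (noisy_answer p e) f) A) =
      (\<integral>\<^sup>+b. emeasure (f (if b then e else \<not> e)) A \<partial>bernoulli_pmf (1 - p))"
    by (simp add: noisy_answer_def measure_pmf.emeasure_eq_measure[symmetric])
  also have "\<dots> = emeasure (f e) A * ennreal (1 - p) + emeasure (f (\<not> e)) A * ennreal p"
    using assms by simp
  also have "\<dots> = ennreal ((1 - p) * measure_pmf.prob (f e) A + p * measure_pmf.prob (f (\<not> e)) A)"
    using assms by (simp add: measure_pmf.emeasure_eq_measure ennreal_mult'' ennreal_plus mult.commute)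
  finally show ?thesis
    using assms by (subst (asm) ennreal_inj) auto
qed

lemma set_pmf_noisy_answer: "0 < p \<Longrightarrow> p < 1 \<Longrightarrow> set_pmf (noisy_answer p r) = UNIV"
  unfolding noisy_answer_def by (auto simp: image_iff intro: exI[of _ True] exI[of _ False])

lemma measure_pmf_prob_Compl: "measure_pmf.prob M (- A) = 1 - measure_pmf.prob M A"
  using measure_pmf.prob_compl[of A M] by (simp add: Compl_eq_Diff_UNIV)

declare alg_run.simps(2)[simp del]

lemma alg_run_Cons_query:
  "k < int c \<Longrightarrow> 0 < B \<Longrightarrow> alg_run p c (e # es) k B =
     bind_pmf (noisy_answer p e) (\<lambda>a. map_pmf (\<lambda>(r, q). (r, Suc q))
       (alg_run p c (e # es) (if a then k + 1 else k - 1) (B - 1)))"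
  by (simp add: alg_run.simps(2))

lemma alg_run_Cons_budget_exhausted: "alg_run p c (e # es) k 0 = return_pmf (False, 0)"
  by (simp add: alg_run.simps(2))

lemma alg_run_Cons_next_edge: "int c \<le> k \<Longrightarrow> 0 < B \<Longrightarrow> alg_run p c (e # es) k B = alg_run p c es 0 B"
  by (simp add: alg_run.simps(2))

lemma alg_run_queries_le_budget: "x \<in> set_pmf (alg_run p c es k B) \<Longrightarrow> snd x \<le> B"
proof (induction p c es k B arbitrary: x rule: alg_run.induct)
  case (1 p c k B)
  then show ?case by simp
next
  case (2 p c e es k B)
  consider (query) "k < int c" "0 < B" | (exhausted) "B = 0" | (next_edge) "int c \<le> k" "0 < B"
    by linarith
  then show ?case
  proof cases
    case query
    with "2.prems" obtain a y where "a \<in> set_pmf (noisy_answer p e)"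
      and "y \<in> set_pmf (alg_run p c (e # es) (if a then k + 1 else k - 1) (B - 1))"
      and "x = (fst y, Suc (snd y))"
      by (auto simp: alg_run_Cons_query split_beta)
    with "2.IH"(1) query show ?thesis by fastforce
  next
    case exhausted
    with "2.prems" show ?thesis by (simp add: alg_run_Cons_budget_exhausted)
  next
    case next_edge
    with "2.IH"(2) "2.prems" show ?thesis by (simp add: alg_run_Cons_next_edge)
  qed
qed

lemma prob_alg_run_Cons_query:
  assumes "0 \<le> p" "p \<le> 1" "k < int c" "0 < B"
  shows "measure_pmf.prob (alg_run p c (e # es) k B) {x. P (fst x)} =
      (1 - p) * measure_pmf.prob (alg_run p c (e # es) (if e then k + 1 else k - 1) (B - 1)) {x. P (fst x)}
    + p * measure_pmf.prob (alg_run p c (e # es) (if e then k - 1 else k + 1) (B - 1)) {x. P (fst x)}"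
proof -
  have "(\<lambda>(r, q). (r, Suc q)) -` {x. P (fst x)} = {x. P (fst x)}"
    by auto
  then show ?thesis
    using assms by (simp add: alg_run_Cons_query measure_pmf_prob_bind_noisy_answer)
qed

lemma budget_mult_prob_alg_run_False_le:
  assumes "0 < p" "p < 1 / 2" "\<forall>e\<in>set es. e" "es \<noteq> []" "k \<le> int c"
  shows "real B * measure_pmf.prob (alg_run p c es k B) {x. \<not> fst x}
           \<le> (real (length es * c) - k) / (1 - 2 * p)"
  using assms
proof (induction p c es k B rule: alg_run.induct)
  case (1 p c k B)
  then show ?case by simp
next
  case (2 p c e es k B)
  define D where "D = real (length (e # es) * c) - k"
  have e: e and drift: "1 - 2 * p > 0"
    using "2.prems" by auto
  have "k \<le> real (length (e # es) * c)"
  proof -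
    have "c \<le> length (e # es) * c"
      by simp
    with "2.prems"(5) show ?thesis
      by linarith
  qed
  then have "0 \<le> D"
    by (simp add: D_def)
  consider (query) "k < int c" "0 < B" | (exhausted) "B = 0" | (next_edge) "int c \<le> k" "0 < B"
    by linarith
  then show ?case
  proof cases
    case query
    let ?P = "\<lambda>k'. measure_pmf.prob (alg_run p c (e # es) k' (B - 1)) {x. \<not> fst x}"
    have IH: "real (B - 1) * ?P (if a then k + 1 else k - 1)
        \<le> (D - (if a then 1 else -1)) / (1 - 2 * p)" for a
      using "2.IH"(1)[of a] "2.prems" query by (auto simp: set_pmf_noisy_answer D_def algebra_simps)
    have "real B * measure_pmf.prob (alg_run p c (e # es) k B) {x. \<not> fst x}
        = real B * ((1 - p) * ?P (k + 1) + p * ?P (k - 1))"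
      using "2.prems" query e by (simp add: prob_alg_run_Cons_query)
    also have "\<dots> = (1 - p) * (real (B - 1) * ?P (k + 1)) + p * (real (B - 1) * ?P (k - 1))
                  + ((1 - p) * ?P (k + 1) + p * ?P (k - 1))"
      using query by (simp add: of_nat_diff algebra_simps)
    also have "\<dots> \<le> (1 - p) * ((D - 1) / (1 - 2 * p)) + p * ((D + 1) / (1 - 2 * p)) + ((1 - p) * 1 + p * 1)"
      using IH[of True] IH[of False] "2.prems" by (intro add_mono mult_left_mono) auto
    also have "\<dots> = D / (1 - 2 * p)"
      using drift by (simp add: divide_simps) (simp add: algebra_simps)
    finally show ?thesis
      by (simp add: D_def)
  next
    case exhausted
    with \<open>0 \<le> D\<close> drift show ?thesis
      by (simp add: D_def)
  next
    case next_edge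
    with "2.prems" have "k = int c"
      by simp
    show ?thesis
    proof (cases "es = []")
      case True
      with next_edge \<open>k = int c\<close> show ?thesis
        by (simp add: alg_run_Cons_next_edge)
    next
      case False
      with "2.IH"(2) "2.prems" next_edge \<open>k = int c\<close> show ?thesis
        by (auto simp: alg_run_Cons_next_edge algebra_simps)
    qed
  qed
qed

text \<open>While the head edge is realized the current counter is irrelevant: the bound is paid
  by the first unrealized edge, whose counter starts at 0.\<close>

lemma prob_alg_run_True_le:
  assumes "0 < p" "p < 1 / 2" "\<exists>e\<in>set es. \<not> e"
  shows "measure_pmf.prob (alg_run p c es k B) {x. fst x}
           \<le> (p / (1 - p)) powr (real c - (if hd es then 0 else k))"
  using assms
proof (induction p c es k B rule: alg_run.induct)
  case (1 p c k B)
  then show ?case by simp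
next
  case (2 p c e es k B)
  define \<rho> where "\<rho> = p / (1 - p)"
  have "0 < \<rho>" "\<rho> < 1"
    using "2.prems" by (auto simp: \<rho>_def field_simps)
  consider (query) "k < int c" "0 < B" | (exhausted) "B = 0" | (next_edge) "int c \<le> k" "0 < B"
    by linarith
  then show ?case
  proof cases
    case query
    let ?P = "\<lambda>k'. measure_pmf.prob (alg_run p c (e # es) k' (B - 1)) {x. fst x}"
    have IH: "?P (if a then k + 1 else k - 1)
        \<le> \<rho> powr (real c - (if e then 0 else if a then k + 1 else k - 1))" for a
      using "2.IH"(1)[of a] "2.prems" query by (auto simp: set_pmf_noisy_answer \<rho>_def)
    show ?thesis
    proof (cases e)
      case True
      have "measure_pmf.prob (alg_run p c (e # es) k B) {x. fst x} = (1 - p) * ?P (k + 1) + p * ?P (k - 1)"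
        using "2.prems" query True by (simp add: prob_alg_run_Cons_query[where P = "\<lambda>b. b"])
      also have "\<dots> \<le> (1 - p) * \<rho> powr c + p * \<rho> powr c"
        using IH[of True] IH[of False] "2.prems" True by (intro add_mono mult_left_mono) auto
      finally show ?thesis
        using True by (simp add: \<rho>_def algebra_simps)
    next
      case False
      define X where "X = \<rho> powr (real c - k)"
      have "real c - real_of_int (k - 1) = (real c - k) + 1" "real c - real_of_int (k + 1) = (real c - k) - 1"
        by simp_all
      then have "\<rho> powr (real c - real_of_int (k - 1)) = X * \<rho>" "\<rho> powr (real c - real_of_int (k + 1)) = X / \<rho>"
        using \<open>0 < \<rho>\<close> by (simp_all only: X_def powr_add powr_diff powr_one)
      with IH[of True] IH[of False] False have IH_X: "?P (k - 1) \<le> X * \<rho>" "?P (k + 1) \<le> X / \<rho>"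
        by simp_all
      have "measure_pmf.prob (alg_run p c (e # es) k B) {x. fst x} = (1 - p) * ?P (k - 1) + p * ?P (k + 1)"
        using "2.prems" query False by (simp add: prob_alg_run_Cons_query[where P = "\<lambda>b. b"])
      also have "\<dots> \<le> (1 - p) * (X * \<rho>) + p * (X / \<rho>)"
        using IH_X "2.prems" by (intro add_mono mult_left_mono) auto
      \<comment> \<open>\<open>(1 - p) \<rho> + p / \<rho> = 1\<close>: the martingale property of \<open>\<rho>^(c - k)\<close>\<close>
      also have "\<dots> = X"
        using "2.prems" by (simp add: \<rho>_def field_simps)
      finally show ?thesis
        using False by (simp add: X_def \<rho>_def)
    qed
  next
    case exhausted
    then show ?thesis
      by (simp add: alg_run_Cons_budget_exhausted)
  next
    case next_edge
    show ?thesis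
    proof (cases e)
      case True
      with "2.IH"(2) "2.prems" next_edge show ?thesis
        by (auto simp: alg_run_Cons_next_edge)
    next
      case False
      have "measure_pmf.prob (alg_run p c (e # es) k B) {x. fst x} \<le> \<rho> powr 0"
        using \<open>0 < \<rho>\<close> by simp
      also have "\<dots> \<le> \<rho> powr (real c - k)"
        using next_edge \<open>0 < \<rho>\<close> \<open>\<rho> < 1\<close> by (intro powr_mono') auto
      finally show ?thesis
        using False by (simp add: \<rho>_def)
    qed
  qed
qed

lemma threshold_pos:
  assumes "0 < p" "p < 1 / 2" "0 < \<delta>" "\<delta> < 1"
  shows "0 < threshold p \<delta>"
proof -
  define r where "r = (1 - p) / p"
  have "1 < r"
    using assms by (simp add: r_def field_simps)
  with assms have "0 < log r (1 / \<delta>)"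
    by simp
  then show ?thesis
    by (simp add: threshold_def r_def)
qed

lemma powr_threshold_le:
  assumes "0 < p" "p < 1 / 2" "0 < \<delta>" "\<delta> < 1"
  shows "(p / (1 - p)) powr real (threshold p \<delta>) \<le> \<delta>"
proof -
  define r where "r = (1 - p) / p"
  have "1 < r"
    using assms by (simp add: r_def field_simps)
  have "log r (1 / \<delta>) \<le> real (threshold p \<delta>)"
    using threshold_pos[OF assms] by (simp add: threshold_def r_def)
  then have "1 / \<delta> \<le> r powr real (threshold p \<delta>)"
    using \<open>1 < r\<close> assms powr_mono[of "log r (1 / \<delta>)" "real (threshold p \<delta>)" r] by simp
  then have "inverse (r powr real (threshold p \<delta>)) \<le> inverse (1 / \<delta>)"
    using assms by (intro le_imp_inverse_le) auto
  moreover have "p / (1 - p) = inverse r"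
    by (simp add: r_def)
  ultimately show ?thesis
    using \<open>1 < r\<close> by (simp add: inverse_powr)
qed

lemma threshold_le:
  assumes "0 < p" "p < 1 / 2" "0 < \<delta>" "\<delta> < 1"
  shows "real (threshold p \<delta>) \<le> ln (1 / \<delta>) / ln ((1 - p) / p) + 1"
proof -
  define r where "r = (1 - p) / p"
  have "1 < r"
    using assms by (simp add: r_def field_simps)
  with assms have "0 < log r (1 / \<delta>)"
    by simp
  then show ?thesis
    by (simp add: threshold_def log_def r_def)
qed

lemma budget_lower_bound:
  assumes "0 < \<epsilon>" "p < 1 / 2"
  shows "real (n * threshold p \<delta>) / (\<epsilon> * (1 - 2 * p)) \<le> real (budget p \<epsilon> \<delta> n)"
proof -
  have "(1 / \<epsilon>) * (1 / (1 - 2 * p)) \<le> real (nat \<lceil>(1 / \<epsilon>) * (1 / (1 - 2 * p))\<rceil>)"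
    by linarith
  then have "1 / (\<epsilon> * (1 - 2 * p)) \<le> real (nat \<lceil>(1 / \<epsilon>) * (1 / (1 - 2 * p))\<rceil>)"
    by simp
  then have "real (n * threshold p \<delta>) * (1 / (\<epsilon> * (1 - 2 * p)))
      \<le> real (n * threshold p \<delta>) * real (nat \<lceil>(1 / \<epsilon>) * (1 / (1 - 2 * p))\<rceil>)"
    by (intro mult_left_mono) auto
  then show ?thesis
    by (simp add: budget_def mult_ac)
qed

lemma budget_upper_bound:
  assumes "0 < p" "p < 1 / 2" "0 < \<epsilon>" "\<epsilon> < 1" "0 < \<delta>" "\<delta> \<le> 1 / 2"
  shows "real (budget p \<epsilon> \<delta> n)
    \<le> 2 / (1 - 2 * p) * (1 / ln ((1 - p) / p) + 1 / ln 2) * (1 / \<epsilon>) * real n * ln (1 / \<delta>)"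
proof -
  define s where "s = (1 / \<epsilon>) * (1 / (1 - 2 * p))"
  define l where "l = ln (1 / \<delta>)"
  have "1 \<le> 1 / \<epsilon>" "1 \<le> 1 / (1 - 2 * p)"
    using assms by (simp_all add: field_simps)
  then have "1 * 1 \<le> s"
    using assms unfolding s_def by (intro mult_mono) auto
  then have "1 \<le> s"
    by simp
  then have s_bound: "real (nat \<lceil>s\<rceil>) \<le> 2 * s"
    by linarith
  have "ln 2 \<le> l"
    using assms by (simp add: l_def field_simps)
  then have "1 \<le> l / ln 2"
    by simp
  have "real (threshold p \<delta>) \<le> l / ln ((1 - p) / p) + 1"
    unfolding l_def using assms by (intro threshold_le) auto
  also have "\<dots> \<le> l / ln ((1 - p) / p) + l / ln 2"
    using \<open>1 \<le> l / ln 2\<close> by linarith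
  finally have t_bound: "real (threshold p \<delta>) \<le> l * (1 / ln ((1 - p) / p) + 1 / ln 2)"
    by (simp add: algebra_simps)
  have "real (budget p \<epsilon> \<delta> n) = real (nat \<lceil>s\<rceil>) * real (threshold p \<delta>) * real n"
    by (simp add: budget_def s_def)
  also have "\<dots> \<le> (2 * s) * (l * (1 / ln ((1 - p) / p) + 1 / ln 2)) * real n"
    using s_bound t_bound \<open>1 \<le> s\<close> by (intro mult_mono mult_right_mono) auto
  finally show ?thesis
    by (simp add: s_def l_def algebra_simps)
qed

lemma prob_alg_A_connected:
  assumes "0 < p" "p < 1 / 2" "0 < \<epsilon>" "0 < \<delta>" "\<delta> < 1" "\<forall>e\<in>set T. e"
  shows "1 - \<epsilon> \<le> measure_pmf.prob (alg_A p \<epsilon> \<delta> T) {x. fst x}"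
proof (cases "T = []")
  case True
  with assms show ?thesis
    by (simp add: alg_A_def)
next
  case False
  define X where "X = real (length T * threshold p \<delta>) / (1 - 2 * p)"
  define P where "P = measure_pmf.prob (alg_A p \<epsilon> \<delta> T) {x. \<not> fst x}"
  have "0 < X"
    using False threshold_pos[of p \<delta>] assms by (simp add: X_def)
  have "X / \<epsilon> * P \<le> real (budget p \<epsilon> \<delta> (length T)) * P"
    using budget_lower_bound[of \<epsilon> p "length T" \<delta>] assms
    by (intro mult_right_mono) (auto simp: X_def P_def mult.commute)
  also have "\<dots> \<le> X"
    using budget_mult_prob_alg_run_False_le[of p T 0 "threshold p \<delta>"] assms False
    by (simp add: X_def P_def alg_A_def)
  finally have "P \<le> \<epsilon>"
    using \<open>0 < X\<close> assms by (simp add: field_simps)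
  moreover have "- {x. fst x} = {x :: bool \<times> nat. \<not> fst x}"
    by auto
  ultimately show ?thesis
    using measure_pmf_prob_Compl[of "alg_A p \<epsilon> \<delta> T" "{x. fst x}"] by (simp add: P_def)
qed

lemma prob_alg_A_disconnected:
  assumes "0 < p" "p < 1 / 2" "0 < \<delta>" "\<delta> < 1" "\<exists>e\<in>set T. \<not> e"
  shows "1 - \<delta> \<le> measure_pmf.prob (alg_A p \<epsilon> \<delta> T) {x. \<not> fst x}"
proof -
  have "measure_pmf.prob (alg_A p \<epsilon> \<delta> T) {x. fst x} \<le> (p / (1 - p)) powr real (threshold p \<delta>)"
    using prob_alg_run_True_le[of p T "threshold p \<delta>" 0] assms by (simp add: alg_A_def)
  also have "\<dots> \<le> \<delta>"
    using powr_threshold_le assms by blast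
  finally have "measure_pmf.prob (alg_A p \<epsilon> \<delta> T) {x. fst x} \<le> \<delta>" .
  moreover have "- {x. \<not> fst x} = {x :: bool \<times> nat. fst x}"
    by auto
  ultimately show ?thesis
    using measure_pmf_prob_Compl[of "alg_A p \<epsilon> \<delta> T" "{x. \<not> fst x}"] by simp
qed

theorem theorem1:
  fixes p :: real
  assumes "0 < p" and "p < 1 / 2"
  shows "(\<forall>\<epsilon> \<delta> T. 0 < \<epsilon> \<and> \<epsilon> < 1 \<and> 0 < \<delta> \<and> \<delta> < 1 \<and> (\<forall>e\<in>set T. e) \<longrightarrow>
            measure_pmf.prob (alg_A p \<epsilon> \<delta> T) {x. fst x} \<ge> 1 - \<epsilon>)
       \<and> (\<forall>\<epsilon> \<delta> T. 0 < \<epsilon> \<and> \<epsilon> < 1 \<and> 0 < \<delta> \<and> \<delta> < 1 \<and> (\<exists>e\<in>set T. \<not> e) \<longrightarrow>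
            measure_pmf.prob (alg_A p \<epsilon> \<delta> T) {x. \<not> fst x} \<ge> 1 - \<delta>)
       \<and> (\<exists>C. \<forall>\<epsilon> \<delta> T. 0 < \<epsilon> \<and> \<epsilon> < 1 \<and> 0 < \<delta> \<and> \<delta> \<le> 1 / 2 \<longrightarrow>
            (\<forall>x\<in>set_pmf (alg_A p \<epsilon> \<delta> T).
               real (snd x) \<le> C * (1 / \<epsilon>) * real (length T) * ln (1 / \<delta>)))"
proof (intro conjI allI impI)
  fix \<epsilon> \<delta> :: real and T :: "bool list"
  assume "0 < \<epsilon> \<and> \<epsilon> < 1 \<and> 0 < \<delta> \<and> \<delta> < 1 \<and> (\<forall>e\<in>set T. e)"
  with assms show "measure_pmf.prob (alg_A p \<epsilon> \<delta> T) {x. fst x} \<ge> 1 - \<epsilon>"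
    by (intro prob_alg_A_connected) auto
next
  fix \<epsilon> \<delta> :: real and T :: "bool list"
  assume "0 < \<epsilon> \<and> \<epsilon> < 1 \<and> 0 < \<delta> \<and> \<delta> < 1 \<and> (\<exists>e\<in>set T. \<not> e)"
  with assms show "measure_pmf.prob (alg_A p \<epsilon> \<delta> T) {x. \<not> fst x} \<ge> 1 - \<delta>"
    by (intro prob_alg_A_disconnected) auto
next
  define C where "C = 2 / (1 - 2 * p) * (1 / ln ((1 - p) / p) + 1 / ln 2)"
  show "\<exists>C. \<forall>\<epsilon> \<delta> T. 0 < \<epsilon> \<and> \<epsilon> < 1 \<and> 0 < \<delta> \<and> \<delta> \<le> 1 / 2 \<longrightarrow>
      (\<forall>x\<in>set_pmf (alg_A p \<epsilon> \<delta> T). real (snd x) \<le> C * (1 / \<epsilon>) * real (length T) * ln (1 / \<delta>))"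
  proof (intro exI[of _ C] allI impI ballI)
    fix \<epsilon> \<delta> :: real and T :: "bool list" and x
    assume "0 < \<epsilon> \<and> \<epsilon> < 1 \<and> 0 < \<delta> \<and> \<delta> \<le> 1 / 2" and "x \<in> set_pmf (alg_A p \<epsilon> \<delta> T)"
    then have "real (snd x) \<le> real (budget p \<epsilon> \<delta> (length T))"
      unfolding alg_A_def by (simp add: alg_run_queries_le_budget)
    also have "\<dots> \<le> C * (1 / \<epsilon>) * real (length T) * ln (1 / \<delta>)"
      unfolding C_def using budget_upper_bound assms \<open>0 < \<epsilon> \<and> \<epsilon> < 1 \<and> 0 < \<delta> \<and> \<delta> \<le> 1 / 2\<close> by blast
    finally show "real (snd x) \<le> C * (1 / \<epsilon>) * real (length T) * ln (1 / \<delta>)" .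
  qed
qed

end
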